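(* Let $\alpha\in(0,1)$ and $0\le W_0\le\alpha$. Under the super-uniformity and independence assumptions of the context, the doubly-weighted GAI++ algorithm defined in the context satisfies, for every $T\in\mathbb N$, $$\mathbb E\left[\frac{V_u(T)+W(T)}{R_u(T)\vee 1}\right]\le\alpha .$$ Consequently, since $W(T)\ge0$, the penalty-weighted false discovery rate satisfies $\mathrm{FDR}_u(T)=\mathbb E\big[V_u(T)/(R_u(T)\vee1)\big]\le\alpha$ for all $T\in\mathbb N$.
   Context: Online testing setup: $p$-values $P_1,P_2,\dots\in[0,1]$ arrive one at a time; $\mathcal H^0\subseteq\mathbb N$ is the fixed set of true-null indices. Super-uniformity: for $t\in\mathcal H^0$, $\mathbb P(P_t\le x)\le x$ for all $x\in[0,1]$. Independence: for each $t\in\mathcal H^0$, $P_t$ is independent of $(P_s)_{s\ne t}$. $\mathcal F^t=\sigma(R_1,\dots,R_t)$; predictable means $\mathcal F^{t-1}$-measurable; monotone means a coordinatewise nondecreasing function of $(R_1,\dots,R_{t-1})$. Doubly-weighted GAI++: at each $t$ one chooses a test level $\alpha_t\ge0$, a prior weight $w_t>0$ and a penalty weight $u_t>0$, all three predictable and monotone, and rejects via $R_t=\mathbf 1\{P_t\le\alpha_t u_t w_t\}$. Let $\tau_1=\min\{t:R_t=1\}$ ($=\infty$ if no rejection). Wealth starts at $W(0)=W_0$ and updates as $W(t)=W(t-1)-\phi_t+R_t\psi_t$, where $\phi_t,\psi_t$ are predictable, $\phi_t\le W(t-1)$, and $$0\le\psi_t\le\min\Big\{\phi_t+u_tb_t,\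 \frac{\phi_t}{u_tw_t\alpha_t}+u_tb_t-u_t\Big\},\qquad b_t=\alpha-\frac{W_0}{u_t}\mathbf 1\{\tau_1>t-1\}$$ (with $\phi_t/(u_tw_t\alpha_t)=+\infty$ if $\alpha_t=0$). Define $V_u(T)=\sum_{t\le T}u_tR_t\mathbf 1\{t\in\mathcal H^0\}$ and $R_u(T)=\sum_{t\le T}u_tR_t$. *)

theory Defs
  imports "HOL-Probability.Probability"
begin

text \<open>Histories of rejections are functions nat => bool; index 0 is unused (always False),
  times start at 1. Given the realised p-value sequence p, test levels al (alpha_t),
  prior weights w (w_t) and penalty weights u (u_t) as functions of the history,
  rej_hist ... n is the history (R_1,...,R_n), False beyond n.\<close>

fun rej_hist :: "(nat \<Rightarrow> (nat \<Rightarrow> bool) \<Rightarrow> real) \<Rightarrow> (nat \<Rightarrow> (nat \<Rightarrow> bool) \<Rightarrow> real)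
    \<Rightarrow> (nat \<Rightarrow> (nat \<Rightarrow> bool) \<Rightarrow> real) \<Rightarrow> (nat \<Rightarrow> real) \<Rightarrow> nat \<Rightarrow> nat \<Rightarrow> bool" where
  "rej_hist al w u p 0 = (\<lambda>s. False)"
| "rej_hist al w u p (Suc n) =
     (rej_hist al w u p n)(Suc n :=
        p (Suc n) \<le> al (Suc n) (rej_hist al w u p n) * u (Suc n) (rej_hist al w u p n)
                     * w (Suc n) (rej_hist al w u p n))"

definition rej :: "(nat \<Rightarrow> (nat \<Rightarrow> bool) \<Rightarrow> real) \<Rightarrow> (nat \<Rightarrow> (nat \<Rightarrow> bool) \<Rightarrow> real)
    \<Rightarrow> (nat \<Rightarrow> (nat \<Rightarrow> bool) \<Rightarrow> real) \<Rightarrow> (nat \<Rightarrow> real) \<Rightarrow> nat \<Rightarrow> bool" where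
  "rej al w u p t = rej_hist al w u p t t"

definition no_rej_before :: "(nat \<Rightarrow> bool) \<Rightarrow> nat \<Rightarrow> bool" where
  "no_rej_before h t = (\<forall>s\<in>{1..<t}. \<not> h s)"

text \<open>b_t = alpha - W0 / u_t * 1{tau_1 > t-1}, evaluated on the history h = (R_1..R_(t-1))\<close>
definition b_coef :: "real \<Rightarrow> real \<Rightarrow> (nat \<Rightarrow> (nat \<Rightarrow> bool) \<Rightarrow> real) \<Rightarrow> nat \<Rightarrow> (nat \<Rightarrow> bool) \<Rightarrow> real" where
  "b_coef a W0 u t h = a - W0 / u t h * (if no_rej_before h t then 1 else 0)"

text \<open>Wealth W(n): phi_t and psi_t are predictable, i.e. functions of (R_1..R_(t-1)).\<close>
fun wealth :: "real \<Rightarrow> (nat \<Rightarrow> (nat \<Rightarrow> bool) \<Rightarrow> real) \<Rightarrow> (nat \<Rightarrow> (nat \<Rightarrow> bool) \<Rightarrow> real)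
    \<Rightarrow> (nat \<Rightarrow> (nat \<Rightarrow> bool) \<Rightarrow> real) \<Rightarrow> (nat \<Rightarrow> (nat \<Rightarrow> bool) \<Rightarrow> real)
    \<Rightarrow> (nat \<Rightarrow> (nat \<Rightarrow> bool) \<Rightarrow> real) \<Rightarrow> (nat \<Rightarrow> real) \<Rightarrow> nat \<Rightarrow> real" where
  "wealth W0 phi psi al w u p 0 = W0"
| "wealth W0 phi psi al w u p (Suc n) =
     wealth W0 phi psi al w u p n - phi (Suc n) (rej_hist al w u p n)
     + (if rej al w u p (Suc n) then psi (Suc n) (rej_hist al w u p n) else 0)"

definition V_u :: "nat set \<Rightarrow> (nat \<Rightarrow> (nat \<Rightarrow> bool) \<Rightarrow> real) \<Rightarrow> (nat \<Rightarrow> (nat \<Rightarrow> bool) \<Rightarrow> real)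
    \<Rightarrow> (nat \<Rightarrow> (nat \<Rightarrow> bool) \<Rightarrow> real) \<Rightarrow> (nat \<Rightarrow> real) \<Rightarrow> nat \<Rightarrow> real" where
  "V_u H0 al w u p T = (\<Sum>t\<in>{1..T}. if rej al w u p t \<and> t \<in> H0
                                     then u t (rej_hist al w u p (t - 1)) else 0)"

definition R_u :: "(nat \<Rightarrow> (nat \<Rightarrow> bool) \<Rightarrow> real) \<Rightarrow> (nat \<Rightarrow> (nat \<Rightarrow> bool) \<Rightarrow> real)
    \<Rightarrow> (nat \<Rightarrow> (nat \<Rightarrow> bool) \<Rightarrow> real) \<Rightarrow> (nat \<Rightarrow> real) \<Rightarrow> nat \<Rightarrow> real" where
  "R_u al w u p T = (\<Sum>t\<in>{1..T}. if rej al w u p t then u t (rej_hist al w u p (t - 1)) else 0)"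

text \<open>Monotone (and predictable): depends only on h 1..h (t-1), coordinatewise nondecreasing.\<close>
definition monotone_pred :: "(nat \<Rightarrow> (nat \<Rightarrow> bool) \<Rightarrow> real) \<Rightarrow> bool" where
  "monotone_pred f = (\<forall>t h h'. t \<ge> 1 \<longrightarrow> (\<forall>s\<in>{1..<t}. h s \<longrightarrow> h' s) \<longrightarrow> f t h \<le> f t h')"

end

theory Submission
  imports Defs
begin

text \<open>Pointwise, the wealth constraints give \<open>V\<^sub>u(T) + W(T) \<le> \<alpha> (R\<^sub>u(T) \<or> 1) + \<Sum>\<^sub>t (R\<^sub>t c\<^sub>t - \<phi>\<^sub>t)\<close>,
  the sum ranging over the nulls \<open>t \<le> T\<close>: the initial wealth \<open>W\<^sub>0\<close> is paid for by the first
  rejection, and the rejection gain \<open>c\<^sub>t\<close> bounds what rejecting a true null can add while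
  \<open>\<alpha>\<^sub>t u\<^sub>t w\<^sub>t c\<^sub>t \<le> \<phi>\<^sub>t\<close>. After division by \<open>R\<^sub>u(T) \<or> 1\<close> it remains to show
  \<open>E[R\<^sub>t c\<^sub>t / (R\<^sub>u(T) \<or> 1)] \<le> E[\<phi>\<^sub>t / (R\<^sub>u(T) \<or> 1)]\<close> for every null \<open>t\<close>. Setting \<open>P\<^sub>t := 0\<close>
  yields a leave-one-out history that is independent of \<open>P\<^sub>t\<close>, agrees with the actual history
  whenever \<open>t\<close> is rejected, and by monotonicity of the rule has at least the same \<open>R\<^sub>u(T)\<close>.
  Conditionally on it, \<open>t\<close> is rejected with probability at most \<open>\<alpha>\<^sub>t u\<^sub>t w\<^sub>t\<close> by
  super-uniformity.\<close>

section \<open>Rejection histories\<close>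

lemma rej_hist_iff: "rej_hist al w u p n s \<longleftrightarrow> 1 \<le> s \<and> s \<le> n \<and> rej al w u p s"
proof (induction n arbitrary: s)
  case (Suc n)
  show ?case
  proof (cases "s = Suc n")
    case True
    then show ?thesis unfolding rej_def by (simp del: rej_hist.simps)
  next
    case False
    then show ?thesis using Suc.IH[of s] by auto
  qed
qed simp

lemma rej_Suc:
  "rej al w u p (Suc n) \<longleftrightarrow>
     p (Suc n) \<le> al (Suc n) (rej_hist al w u p n) * u (Suc n) (rej_hist al w u p n)
                  * w (Suc n) (rej_hist al w u p n)"
  by (simp add: rej_def)

lemma rej_imp_ge_1: "rej al w u p t \<Longrightarrow> 1 \<le> t"
  by (cases t) (simp_all add: rej_def)

definition hist_upto :: "nat \<Rightarrow> (nat \<Rightarrow> bool) \<Rightarrow> nat \<Rightarrow> bool" where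
  "hist_upto n h = (\<lambda>s. 1 \<le> s \<and> s \<le> n \<and> h s)"

lemma rej_hist_eq_hist_upto: "n \<le> m \<Longrightarrow> rej_hist al w u p n = hist_upto n (rej_hist al w u p m)"
  by (auto simp: hist_upto_def rej_hist_iff)

lemma rej_hist_eq_if_le:
  "n \<le> m \<Longrightarrow> rej_hist al w u p m = rej_hist al w u q m \<Longrightarrow> rej_hist al w u p n = rej_hist al w u q n"
  by (metis rej_hist_eq_hist_upto)

lemma rej_eq_rej_hist: "1 \<le> t \<Longrightarrow> t \<le> n \<Longrightarrow> rej al w u p t = rej_hist al w u p n t"
  by (simp add: rej_hist_iff)

lemma rej_hist_cong:
  "(\<And>s. 1 \<le> s \<Longrightarrow> s \<le> n \<Longrightarrow> p s = q s) \<Longrightarrow> rej_hist al w u p n = rej_hist al w u q n"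
  by (induction n) simp_all

lemma rej_hist_fun_upd_zero:
  assumes "\<And>h. 0 \<le> al t h * u t h * w t h" and "rej al w u p t"
  shows "rej_hist al w u (p(t := 0)) n = rej_hist al w u p n"
proof (induction n)
  case (Suc n)
  have "p (Suc n) \<le> al (Suc n) (rej_hist al w u p n) * u (Suc n) (rej_hist al w u p n)
                      * w (Suc n) (rej_hist al w u p n)" if "Suc n = t"
    using assms(2) that rej_Suc by metis
  with assms(1) Suc.IH show ?case by auto
qed simp

lemma monotone_predD:
  "monotone_pred f \<Longrightarrow> 1 \<le> t \<Longrightarrow> (\<And>s. 1 \<le> s \<Longrightarrow> s < t \<Longrightarrow> h s \<Longrightarrow> h' s) \<Longrightarrow> f t h \<le> f t h'"
  unfolding monotone_pred_def by auto

lemma rej_hist_antimono: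
  assumes nonneg: "\<And>t h. 1 \<le> t \<Longrightarrow> 0 \<le> al t h" "\<And>t h. 1 \<le> t \<Longrightarrow> 0 \<le> u t h"
      "\<And>t h. 1 \<le> t \<Longrightarrow> 0 \<le> w t h"
    and mono: "monotone_pred al" "monotone_pred u" "monotone_pred w"
    and le: "\<And>s. 1 \<le> s \<Longrightarrow> q s \<le> p s"
    and "rej_hist al w u p n s"
  shows "rej_hist al w u q n s"
  using \<open>rej_hist al w u p n s\<close>
proof (induction n arbitrary: s)
  case (Suc n)
  let ?hp = "rej_hist al w u p n" and ?hq = "rej_hist al w u q n"
  have "\<And>f. monotone_pred f \<Longrightarrow> f (Suc n) ?hp \<le> f (Suc n) ?hq"
    using Suc.IH by (auto intro: monotone_predD)
  then have "al (Suc n) ?hp * u (Suc n) ?hp * w (Suc n) ?hp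
               \<le> al (Suc n) ?hq * u (Suc n) ?hq * w (Suc n) ?hq"
    using mono nonneg by (intro mult_mono) auto
  with Suc le[of "Suc n"] show ?case
    by (cases "s = Suc n") auto
qed simp

definition histories :: "nat \<Rightarrow> (nat \<Rightarrow> bool) set" where
  "histories n = {h. \<forall>s. h s \<longrightarrow> s \<in> {1..n}}"

lemma finite_histories: "finite (histories n)"
proof (rule finite_subset)
  show "histories n \<subseteq> (\<lambda>A s. s \<in> A) ` Pow {1..n}"
  proof
    fix h assume "h \<in> histories n"
    then have "{s. h s} \<in> Pow {1..n}" by (auto simp: histories_def)
    then show "h \<in> (\<lambda>A s. s \<in> A) ` Pow {1..n}" by force
  qed
qed simp

lemma rej_hist_in_histories: "rej_hist al w u p n \<in> histories n"
  by (simp add: histories_def rej_hist_iff)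

lemma rej_hist_Suc_eq_iff:
  "rej_hist al w u p (Suc n) = h \<longleftrightarrow>
     rej_hist al w u p n = h(Suc n := False) \<and>
     (p (Suc n) \<le> al (Suc n) (h(Suc n := False)) * u (Suc n) (h(Suc n := False))
                   * w (Suc n) (h(Suc n := False))) = h (Suc n)"
proof -
  define f where "f = rej_hist al w u p n"
  have "f (Suc n) = False" unfolding f_def by (simp add: rej_hist_iff)
  then have upd: "f(Suc n := v) = h \<longleftrightarrow> f = h(Suc n := False) \<and> v = h (Suc n)" for v
    by (auto simp: fun_eq_iff)
  show ?thesis unfolding rej_hist.simps(2) f_def[symmetric] upd by auto
qed

lemma rej_hist_level_set_in:
  assumes "sigma_algebra \<Omega> S" and "\<And>s x. 1 \<le> s \<Longrightarrow> {\<omega>\<in>\<Omega>. Q s \<omega> \<le> x} \<in> S"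
  shows "{\<omega>\<in>\<Omega>. rej_hist al w u (\<lambda>s. Q s \<omega>) n = h} \<in> S"
proof -
  interpret sigma_algebra \<Omega> S by fact
  show ?thesis
  proof (induction n arbitrary: h)
    case 0
    show ?case by (cases "h = (\<lambda>s. False)") auto
  next
    case (Suc n)
    define h' where "h' = h(Suc n := False)"
    define C where "C = {\<omega>\<in>\<Omega>. Q (Suc n) \<omega> \<le> al (Suc n) h' * u (Suc n) h' * w (Suc n) h'}"
    have "C \<in> S" unfolding C_def by (rule assms(2)) simp
    then have "{\<omega>\<in>\<Omega>. rej_hist al w u (\<lambda>s. Q s \<omega>) n = h'} \<inter> (if h (Suc n) then C else \<Omega> - C) \<in> S"
      using Suc.IH[of h'] by auto
    moreover have "{\<omega>\<in>\<Omega>. rej_hist al w u (\<lambda>s. Q s \<omega>) (Suc n) = h}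
        = {\<omega>\<in>\<Omega>. rej_hist al w u (\<lambda>s. Q s \<omega>) n = h'} \<inter> (if h (Suc n) then C else \<Omega> - C)"
      unfolding rej_hist_Suc_eq_iff h'_def C_def by auto
    ultimately show ?case by (simp del: rej_hist.simps)
  qed
qed

definition R_u_of :: "(nat \<Rightarrow> (nat \<Rightarrow> bool) \<Rightarrow> real) \<Rightarrow> nat \<Rightarrow> (nat \<Rightarrow> bool) \<Rightarrow> real" where
  "R_u_of u T h = (\<Sum>s\<in>{1..T}. if h s then u s (hist_upto (s - 1) h) else 0)"

lemma R_u_eq_R_u_of: "R_u al w u p T = R_u_of u T (rej_hist al w u p T)"
  unfolding R_u_def R_u_of_def
  by (intro sum.cong refl) (auto simp: rej_hist_eq_hist_upto[symmetric] rej_eq_rej_hist[symmetric])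

lemma R_u_antimono:
  assumes nonneg: "\<And>t h. 1 \<le> t \<Longrightarrow> 0 \<le> al t h" "\<And>t h. 1 \<le> t \<Longrightarrow> 0 < u t h"
      "\<And>t h. 1 \<le> t \<Longrightarrow> 0 \<le> w t h"
    and mono: "monotone_pred al" "monotone_pred u" "monotone_pred w"
    and le: "\<And>s. 1 \<le> s \<Longrightarrow> q s \<le> p s"
  shows "R_u al w u p T \<le> R_u al w u q T"
  unfolding R_u_def
proof (rule sum_mono)
  fix t assume t: "t \<in> {1..T}"
  have pq: "rej_hist al w u p n s \<Longrightarrow> rej_hist al w u q n s" for n s
    using nonneg mono le by (intro rej_hist_antimono[of al u w q p]) (auto simp: less_imp_le)
  then have "rej al w u p t \<Longrightarrow> rej al w u q t"
    unfolding rej_def .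
  moreover have "u t (rej_hist al w u p (t - 1)) \<le> u t (rej_hist al w u q (t - 1))"
    using t pq by (intro monotone_predD[OF mono(2)]) auto
  moreover have "0 < u t (rej_hist al w u q (t - 1))" using t nonneg(2) by simp
  ultimately show "(if rej al w u p t then u t (rej_hist al w u p (t - 1)) else 0)
      \<le> (if rej al w u q t then u t (rej_hist al w u q (t - 1)) else 0)"
    by (simp del: rej_hist.simps)
qed

section \<open>The pointwise wealth bound\<close>

lemma wealth_eq_sum:
  "wealth W0 phi psi al w u p n = W0 + (\<Sum>t\<in>{1..n}.
     (if rej al w u p t then psi t (rej_hist al w u p (t - 1)) else 0) - phi t (rej_hist al w u p (t - 1)))"
proof (induction n)
  case (Suc n)
  have "wealth W0 phi psi al w u p (Suc n) = wealth W0 phi psi al w u p n - phi (Suc n) (rej_hist al w u p n)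
     + (if rej al w u p (Suc n) then psi (Suc n) (rej_hist al w u p n) else 0)"
    by (simp only: wealth.simps)
  with Suc.IH show ?case by simp
qed simp

lemma wealth_nonneg:
  assumes "0 \<le> W0"
    and "\<And>t. 1 \<le> t \<Longrightarrow> phi t (rej_hist al w u p (t - 1)) \<le> wealth W0 phi psi al w u p (t - 1)"
    and "\<And>t. 1 \<le> t \<Longrightarrow> 0 \<le> psi t (rej_hist al w u p (t - 1))"
  shows "0 \<le> wealth W0 phi psi al w u p n"
proof (induction n)
  case (Suc n)
  with assms(2,3)[of "Suc n"] show ?case by (simp del: rej_hist.simps)
qed (simp add: assms(1))

lemma obtain_first_rejection:
  assumes "rej al w u p t" and "t \<le> T"
  obtains t0 where "t0 \<in> {1..T}" "rej al w u p t0" "no_rej_before (rej_hist al w u p (t0 - 1)) t0"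
proof -
  define t0 where "t0 = (LEAST t. rej al w u p t)"
  have rej_t0: "rej al w u p t0" using assms(1) unfolding t0_def by (rule LeastI)
  have "t0 \<le> t" using assms(1) unfolding t0_def by (rule Least_le)
  moreover have "1 \<le> t0" using rej_t0 by (rule rej_imp_ge_1)
  moreover have "\<not> rej al w u p s" if "s < t0" for s
    using not_less_Least[of s "rej al w u p"] that unfolding t0_def by blast
  then have "no_rej_before (rej_hist al w u p (t0 - 1)) t0"
    by (auto simp: no_rej_before_def rej_hist_iff)
  ultimately show ?thesis using rej_t0 assms(2) by (intro that) auto
qed

lemma initial_wealth_budget:
  assumes "0 \<le> W0" "W0 \<le> a" and u_pos: "\<And>t h. 1 \<le> t \<Longrightarrow> 0 < u t h"
  shows "W0 + (\<Sum>t\<in>{1..T}. if rej al w u p t then u t (rej_hist al w u p (t - 1))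
              * b_coef a W0 u t (rej_hist al w u p (t - 1)) else 0)
         \<le> a * max (R_u al w u p T) 1"
proof -
  define h where "h t = rej_hist al w u p (t - 1)" for t
  define first where "first t \<longleftrightarrow> rej al w u p t \<and> no_rej_before (h t) t" for t
  define N where "N = (\<Sum>t\<in>{1..T}. if first t then 1 else 0 :: real)"
  have "(if rej al w u p t then u t (h t) * b_coef a W0 u t (h t) else 0)
      = a * (if rej al w u p t then u t (h t) else 0) - W0 * (if first t then 1 else 0)"
    if "t \<in> {1..T}" for t
    using u_pos[of t "h t"] that by (simp add: b_coef_def first_def right_diff_distrib)
  then have sum_eq: "(\<Sum>t\<in>{1..T}. if rej al w u p t then u t (h t) * b_coef a W0 u t (h t) else 0)
      = a * R_u al w u p T - W0 * N"
    unfolding R_u_def N_def h_def by (simp add: sum_subtractf sum_distrib_left)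
  show ?thesis
  proof (cases "\<exists>t\<in>{1..T}. rej al w u p t")
    case True
    then obtain t0 where "t0 \<in> {1..T}" "first t0"
      using obtain_first_rejection unfolding first_def h_def by (metis atLeastAtMost_iff)
    then have "1 \<le> N"
      unfolding N_def using member_le_sum[of t0 "{1..T}" "\<lambda>t. if first t then 1 else 0 :: real"]
      by simp
    then have "W0 \<le> W0 * N" using \<open>0 \<le> W0\<close> mult_left_mono[of 1 N W0] by simp
    moreover have "0 \<le> a" using assms(1,2) by simp
    ultimately show ?thesis unfolding h_def[symmetric] sum_eq
      using mult_left_mono[of "R_u al w u p T" "max (R_u al w u p T) 1" a] by simp
  next
    case False
    then show ?thesis using assms(2) by (simp add: R_u_def)
  qed
qed

text \<open>The \<open>max 0\<close> matters only on unrealised histories, where \<open>\<phi>\<close> may be negative.\<close>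

definition rejection_gain :: "real \<Rightarrow> real \<Rightarrow> (nat \<Rightarrow> (nat \<Rightarrow> bool) \<Rightarrow> real)
    \<Rightarrow> (nat \<Rightarrow> (nat \<Rightarrow> bool) \<Rightarrow> real) \<Rightarrow> (nat \<Rightarrow> (nat \<Rightarrow> bool) \<Rightarrow> real)
    \<Rightarrow> (nat \<Rightarrow> (nat \<Rightarrow> bool) \<Rightarrow> real) \<Rightarrow> (nat \<Rightarrow> (nat \<Rightarrow> bool) \<Rightarrow> real)
    \<Rightarrow> nat \<Rightarrow> (nat \<Rightarrow> bool) \<Rightarrow> real" where
  "rejection_gain a W0 al w u phi psi t h =
     (if al t h \<noteq> 0 then max 0 (phi t h) / (al t h * u t h * w t h)
      else max 0 (u t h + psi t h - u t h * b_coef a W0 u t h))"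

lemma rejection_gain_nonneg:
  "0 \<le> al t h \<Longrightarrow> 0 < u t h \<Longrightarrow> 0 < w t h \<Longrightarrow> 0 \<le> rejection_gain a W0 al w u phi psi t h"
  by (simp add: rejection_gain_def)

lemma threshold_mult_rejection_gain_le:
  "0 \<le> phi t h \<Longrightarrow> 0 < u t h \<Longrightarrow> 0 < w t h \<Longrightarrow>
     al t h * u t h * w t h * rejection_gain a W0 al w u phi psi t h \<le> phi t h"
  by (simp add: rejection_gain_def)

lemma rejection_gain_ge:
  assumes "0 \<le> phi t h"
    and "al t h \<noteq> 0 \<Longrightarrow> psi t h \<le> phi t h / (u t h * w t h * al t h) + u t h * b_coef a W0 u t h - u t h"
  shows "u t h + psi t h - u t h * b_coef a W0 u t h \<le> rejection_gain a W0 al w u phi psi t h"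
  using assms by (auto simp: rejection_gain_def ac_simps)

definition excess :: "real \<Rightarrow> real \<Rightarrow> (nat \<Rightarrow> (nat \<Rightarrow> bool) \<Rightarrow> real)
    \<Rightarrow> (nat \<Rightarrow> (nat \<Rightarrow> bool) \<Rightarrow> real) \<Rightarrow> (nat \<Rightarrow> (nat \<Rightarrow> bool) \<Rightarrow> real)
    \<Rightarrow> (nat \<Rightarrow> (nat \<Rightarrow> bool) \<Rightarrow> real) \<Rightarrow> (nat \<Rightarrow> (nat \<Rightarrow> bool) \<Rightarrow> real)
    \<Rightarrow> (nat \<Rightarrow> real) \<Rightarrow> nat \<Rightarrow> real" where
  "excess a W0 al w u phi psi p t =
     (if rej al w u p t then rejection_gain a W0 al w u phi psi t (rej_hist al w u p (t - 1)) else 0)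
     - phi t (rej_hist al w u p (t - 1))"

lemma V_u_add_wealth_div_le:
  assumes W0: "0 \<le> W0" "W0 \<le> a" and u_pos: "\<And>t h. 1 \<le> t \<Longrightarrow> 0 < u t h"
    and phi_nonneg: "\<And>t. 1 \<le> t \<Longrightarrow> 0 \<le> phi t (rej_hist al w u p (t - 1))"
    and psi_le1: "\<And>t h. 1 \<le> t \<Longrightarrow> h = rej_hist al w u p (t - 1) \<Longrightarrow>
        psi t h \<le> phi t h + u t h * b_coef a W0 u t h"
    and psi_le2: "\<And>t h. 1 \<le> t \<Longrightarrow> h = rej_hist al w u p (t - 1) \<Longrightarrow> al t h \<noteq> 0 \<Longrightarrow>
        psi t h \<le> phi t h / (u t h * w t h * al t h) + u t h * b_coef a W0 u t h - u t h"
  shows "(V_u H0 al w u p T + wealth W0 phi psi al w u p T) / max (R_u al w u p T) 1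
      \<le> a + (\<Sum>t\<in>{1..T} \<inter> H0. excess a W0 al w u phi psi p t / max (R_u al w u p T) 1)"
proof -
  define h where "h t = rej_hist al w u p (t - 1)" for t
  define r where "r t = rej al w u p t" for t
  define c where "c t = rejection_gain a W0 al w u phi psi t (h t)" for t
  have "(if r t \<and> t \<in> H0 then u t (h t) else 0) + ((if r t then psi t (h t) else 0) - phi t (h t))
      \<le> (if r t then u t (h t) * b_coef a W0 u t (h t) else 0)
         + (if t \<in> H0 then (if r t then c t else 0) - phi t (h t) else 0)"
    if "t \<in> {1..T}" for t
  proof -
    from that have "1 \<le> t" by simp
    have "u t (h t) + psi t (h t) - u t (h t) * b_coef a W0 u t (h t) \<le> c t"
      unfolding c_def using phi_nonneg psi_le2 \<open>1 \<le> t\<close> h_def by (intro rejection_gain_ge) auto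
    then show ?thesis using phi_nonneg[OF \<open>1 \<le> t\<close>] psi_le1[OF \<open>1 \<le> t\<close>] unfolding h_def by auto
  qed
  then have "(\<Sum>t\<in>{1..T}. (if r t \<and> t \<in> H0 then u t (h t) else 0)
                 + ((if r t then psi t (h t) else 0) - phi t (h t)))
      \<le> (\<Sum>t\<in>{1..T}. (if r t then u t (h t) * b_coef a W0 u t (h t) else 0)
                 + (if t \<in> H0 then (if r t then c t else 0) - phi t (h t) else 0))"
    by (rule sum_mono)
  moreover have "W0 + (\<Sum>t\<in>{1..T}. if r t then u t (h t) * b_coef a W0 u t (h t) else 0)
      \<le> a * max (R_u al w u p T) 1"
    unfolding r_def h_def using W0 u_pos by (rule initial_wealth_budget)
  ultimately have "V_u H0 al w u p T + wealth W0 phi psi al w u p T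
      \<le> a * max (R_u al w u p T) 1 + (\<Sum>t\<in>{1..T} \<inter> H0. excess a W0 al w u phi psi p t)"
    unfolding V_u_def wealth_eq_sum excess_def sum.inter_restrict[OF finite_atLeastAtMost]
      sum.distrib r_def h_def c_def
    by (simp add: if_distrib)
  then have "(V_u H0 al w u p T + wealth W0 phi psi al w u p T) / max (R_u al w u p T) 1
      \<le> (a * max (R_u al w u p T) 1 + (\<Sum>t\<in>{1..T} \<inter> H0. excess a W0 al w u phi psi p t))
          / max (R_u al w u p T) 1"
    by (rule divide_right_mono) simp
  then show ?thesis by (simp add: add_divide_distrib sum_divide_distrib)
qed

section \<open>Finitely-valued random variables and independence\<close>

lemma (in finite_measure) has_bochner_integral_sum_indicators:
  fixes c :: "'b \<Rightarrow> real"
  assumes "finite S" and A: "\<And>k. k \<in> S \<Longrightarrow> A k \<in> sets M"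
    and f: "\<And>\<omega>. \<omega> \<in> space M \<Longrightarrow> f \<omega> = (\<Sum>k\<in>S. c k * indicator (A k) \<omega>)"
  shows "has_bochner_integral M f (\<Sum>k\<in>S. c k * measure M (A k))"
proof -
  have "has_bochner_integral M f I \<longleftrightarrow>
      has_bochner_integral M (\<lambda>\<omega>. \<Sum>k\<in>S. c k * indicator (A k) \<omega>) I" for I
    using f by (intro has_bochner_integral_cong) simp_all
  moreover have "has_bochner_integral M (\<lambda>\<omega>. \<Sum>k\<in>S. c k * indicator (A k) \<omega>)
      (\<Sum>k\<in>S. c k * measure M (A k))"
    using A emeasure_finite[THEN less_top[THEN iffD1]]
    by (intro has_bochner_integral_sum has_bochner_integral_mult_right
        has_bochner_integral_real_indicator) (simp_all add: infinity_ennreal_def)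
  ultimately show ?thesis by blast
qed

lemma (in finite_measure) has_bochner_integral_finite_valued:
  fixes g :: "'b \<Rightarrow> real"
  assumes "finite S" and K: "\<And>\<omega>. \<omega> \<in> space M \<Longrightarrow> K \<omega> \<in> S"
    and "\<And>k. k \<in> S \<Longrightarrow> {\<omega>\<in>space M. K \<omega> = k} \<in> sets M"
  shows "has_bochner_integral M (\<lambda>\<omega>. g (K \<omega>)) (\<Sum>k\<in>S. g k * measure M {\<omega>\<in>space M. K \<omega> = k})"
proof (rule has_bochner_integral_sum_indicators)
  fix \<omega> assume "\<omega> \<in> space M"
  then have "(\<Sum>k\<in>S. g k * indicator {\<omega>\<in>space M. K \<omega> = k} \<omega>) = (\<Sum>k\<in>S. if k = K \<omega> then g k else 0)"
    by (intro sum.cong) (auto simp: indicator_def)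
  with K \<open>\<omega> \<in> space M\<close> \<open>finite S\<close> show "g (K \<omega>) = (\<Sum>k\<in>S. g k * indicator {\<omega>\<in>space M. K \<omega> = k} \<omega>)"
    by simp
qed fact+

lemma (in prob_space) indep_superunif_prob_le:
  fixes X :: "'a \<Rightarrow> real"
  assumes indep: "indep_set A B"
    and XA: "\<And>x. {\<omega>\<in>space M. X \<omega> \<le> x} \<in> A"
    and superunif: "\<And>x. 0 \<le> x \<Longrightarrow> x \<le> 1 \<Longrightarrow> prob {\<omega>\<in>space M. X \<omega> \<le> x} \<le> x"
    and "E \<in> B" "0 \<le> x"
  shows "prob ({\<omega>\<in>space M. X \<omega> \<le> x} \<inter> E) \<le> x * prob E"
proof -
  have "prob {\<omega>\<in>space M. X \<omega> \<le> x} \<le> x"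
  proof (cases "x \<le> 1")
    case False
    then show ?thesis using prob_le_1[of "{\<omega>\<in>space M. X \<omega> \<le> x}"] by linarith
  qed (use superunif \<open>0 \<le> x\<close> in simp)
  then show ?thesis
    using indep_setD[OF indep XA \<open>E \<in> B\<close>] by (simp add: mult_right_mono)
qed

lemma (in prob_space) indep_threshold_integral_le:
  fixes X :: "'a \<Rightarrow> real" and F G :: "'b \<Rightarrow> real"
  assumes indep: "indep_set A B"
    and XA: "\<And>x. {\<omega>\<in>space M. X \<omega> \<le> x} \<in> A"
    and superunif: "\<And>x. 0 \<le> x \<Longrightarrow> x \<le> 1 \<Longrightarrow> prob {\<omega>\<in>space M. X \<omega> \<le> x} \<le> x"
    and "finite S" and K: "\<And>\<omega>. \<omega> \<in> space M \<Longrightarrow> K \<omega> \<in> S"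
    and KB: "\<And>k. k \<in> S \<Longrightarrow> {\<omega>\<in>space M. K \<omega> = k} \<in> B"
    and F: "\<And>k. 0 \<le> F k" and G: "\<And>k. 0 \<le> G k"
  shows "integrable M (\<lambda>\<omega>. if X \<omega> \<le> F (K \<omega>) then G (K \<omega>) else 0)"
    and "integrable M (\<lambda>\<omega>. F (K \<omega>) * G (K \<omega>))"
    and "(\<integral>\<omega>. (if X \<omega> \<le> F (K \<omega>) then G (K \<omega>) else 0) \<partial>M) \<le> (\<integral>\<omega>. F (K \<omega>) * G (K \<omega>) \<partial>M)"
proof -
  define C where "C k = {\<omega>\<in>space M. X \<omega> \<le> F k}" for k
  define D where "D k = {\<omega>\<in>space M. K \<omega> = k}" for k
  have CA: "C k \<in> A" for k unfolding C_def by (rule XA)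
  have DB: "k \<in> S \<Longrightarrow> D k \<in> B" for k unfolding D_def by (rule KB)
  have L: "has_bochner_integral M (\<lambda>\<omega>. if X \<omega> \<le> F (K \<omega>) then G (K \<omega>) else 0)
      (\<Sum>k\<in>S. G k * prob (C k \<inter> D k))"
  proof (rule has_bochner_integral_sum_indicators[OF \<open>finite S\<close>])
    show "k \<in> S \<Longrightarrow> C k \<inter> D k \<in> events" for k
      using CA DB indep_setD_ev1[OF indep] indep_setD_ev2[OF indep] by blast
    fix \<omega> assume "\<omega> \<in> space M"
    then have "(\<Sum>k\<in>S. G k * indicator (C k \<inter> D k) \<omega>)
        = (\<Sum>k\<in>S. if k = K \<omega> then (if X \<omega> \<le> F k then G k else 0) else 0)"
      by (intro sum.cong) (auto simp: indicator_def C_def D_def)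
    with K \<open>\<omega> \<in> space M\<close> \<open>finite S\<close>
    show "(if X \<omega> \<le> F (K \<omega>) then G (K \<omega>) else 0) = (\<Sum>k\<in>S. G k * indicator (C k \<inter> D k) \<omega>)"
      by simp
  qed
  have R: "has_bochner_integral M (\<lambda>\<omega>. F (K \<omega>) * G (K \<omega>)) (\<Sum>k\<in>S. (F k * G k) * prob (D k))"
    unfolding D_def
  proof (rule has_bochner_integral_finite_valued[OF \<open>finite S\<close> K])
    show "k \<in> S \<Longrightarrow> {\<omega> \<in> space M. K \<omega> = k} \<in> events" for k
      using DB indep_setD_ev2[OF indep] unfolding D_def by blast
  qed
  have "(\<Sum>k\<in>S. G k * prob (C k \<inter> D k)) \<le> (\<Sum>k\<in>S. (F k * G k) * prob (D k))"
  proof (rule sum_mono)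
    fix k assume "k \<in> S"
    have "prob (C k \<inter> D k) \<le> F k * prob (D k)"
      unfolding C_def using indep XA superunif DB[OF \<open>k \<in> S\<close>] F by (rule indep_superunif_prob_le)
    then have "G k * prob (C k \<inter> D k) \<le> G k * (F k * prob (D k))"
      by (rule mult_left_mono) (rule G)
    then show "G k * prob (C k \<inter> D k) \<le> (F k * G k) * prob (D k)"
      by (simp add: ac_simps)
  qed
  then show "(\<integral>\<omega>. (if X \<omega> \<le> F (K \<omega>) then G (K \<omega>) else 0) \<partial>M) \<le> (\<integral>\<omega>. F (K \<omega>) * G (K \<omega>) \<partial>M)"
    unfolding has_bochner_integral_integral_eq[OF L] has_bochner_integral_integral_eq[OF R] .
  show "integrable M (\<lambda>\<omega>. if X \<omega> \<le> F (K \<omega>) then G (K \<omega>) else 0)"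
    using L by (rule integrable.intros)
  show "integrable M (\<lambda>\<omega>. F (K \<omega>) * G (K \<omega>))"
    using R by (rule integrable.intros)
qed

lemma integral_le_of_dominated:
  fixes f g :: "'a \<Rightarrow> real"
  assumes "integrable M g" "\<And>x. x \<in> space M \<Longrightarrow> f x \<le> g x" "integral\<^sup>L M g \<le> c" "0 \<le> c"
  shows "integral\<^sup>L M f \<le> c"
proof (cases "integrable M f")
  case True
  then show ?thesis using assms integral_mono[of M f g] by simp
qed (simp add: not_integrable_integral_eq assms(4))

section \<open>The leave-one-out argument\<close>

locale doubly_weighted_gai = prob_space M
  for M :: "'a measure" and P :: "nat \<Rightarrow> 'a \<Rightarrow> real" and H0 :: "nat set"
    and al w u :: "nat \<Rightarrow> (nat \<Rightarrow> bool) \<Rightarrow> real" +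
  assumes P_meas: "\<And>t. P t \<in> borel_measurable M"
    and P_nonneg: "\<And>t \<omega>. \<omega> \<in> space M \<Longrightarrow> 0 \<le> P t \<omega>"
    and superunif: "\<And>t x. t \<in> H0 \<Longrightarrow> 0 \<le> x \<Longrightarrow> x \<le> 1 \<Longrightarrow> prob {\<omega> \<in> space M. P t \<omega> \<le> x} \<le> x"
    and indep: "\<And>t. t \<in> H0 \<Longrightarrow>
      indep_set (sigma_sets (space M) {P t -` A \<inter> space M | A. A \<in> sets borel})
        (sigma_sets (space M) {P s -` A \<inter> space M | s A. s \<in> {1..} - {t} \<and> A \<in> sets borel})"
    and al_nonneg: "\<And>t h. 1 \<le> t \<Longrightarrow> 0 \<le> al t h"
    and w_pos: "\<And>t h. 1 \<le> t \<Longrightarrow> 0 < w t h"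
    and u_pos: "\<And>t h. 1 \<le> t \<Longrightarrow> 0 < u t h"
    and al_mono: "monotone_pred al" and w_mono: "monotone_pred w" and u_mono: "monotone_pred u"
begin

abbreviation hist :: "'a \<Rightarrow> nat \<Rightarrow> nat \<Rightarrow> bool" where
  "hist \<omega> \<equiv> rej_hist al w u (\<lambda>s. P s \<omega>)"

lemma threshold_nonneg: "1 \<le> t \<Longrightarrow> 0 \<le> al t h * u t h * w t h"
  using al_nonneg u_pos w_pos by (simp add: less_imp_le)

lemma P_le_in_sets: "{\<omega>\<in>space M. P s \<omega> \<le> x} \<in> sets M"
proof -
  have "{\<omega>\<in>space M. P s \<omega> \<le> x} = P s -` {..x} \<inter> space M" by auto
  then show ?thesis using measurable_sets[OF P_meas atMost_borel] by simp
qed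

lemma integrable_factor_hist:
  fixes f :: "'a \<Rightarrow> real"
  assumes "\<And>\<omega> \<omega>'. \<omega> \<in> space M \<Longrightarrow> \<omega>' \<in> space M \<Longrightarrow> hist \<omega> n = hist \<omega>' n \<Longrightarrow> f \<omega> = f \<omega>'"
  shows "integrable M f"
proof -
  define g where "g k = f (SOME \<omega>. \<omega> \<in> space M \<and> hist \<omega> n = k)" for k
  have "has_bochner_integral M (\<lambda>\<omega>. g (hist \<omega> n))
      (\<Sum>k\<in>histories n. g k * prob {\<omega>\<in>space M. hist \<omega> n = k})"
    using finite_histories rej_hist_in_histories
      rej_hist_level_set_in[OF sets.sigma_algebra_axioms P_le_in_sets]
    by (intro has_bochner_integral_finite_valued) auto
  then have "integrable M (\<lambda>\<omega>. g (hist \<omega> n))" by (rule integrable.intros)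
  moreover have "g (hist \<omega> n) = f \<omega>" if "\<omega> \<in> space M" for \<omega>
  proof -
    have "\<exists>\<omega>'. \<omega>' \<in> space M \<and> hist \<omega>' n = hist \<omega> n" using that by blast
    then show ?thesis unfolding g_def by (rule someI2_ex) (use that in \<open>auto intro: assms\<close>)
  qed
  ultimately show ?thesis by (metis (no_types, lifting) Bochner_Integration.integrable_cong)
qed

lemma integrable_fun_rej_hist_R_u:
  fixes g :: "bool \<Rightarrow> (nat \<Rightarrow> bool) \<Rightarrow> real \<Rightarrow> real"
  assumes "t \<le> T"
  shows "integrable M (\<lambda>\<omega>. g (rej al w u (\<lambda>s. P s \<omega>) t) (hist \<omega> (t - 1)) (R_u al w u (\<lambda>s. P s \<omega>) T))"
proof (rule integrable_factor_hist[where n = T])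
  fix \<omega> \<omega>' assume eq: "hist \<omega> T = hist \<omega>' T"
  have "hist \<omega> n = hist \<omega>' n" if "n \<le> T" for n
    using that eq by (rule rej_hist_eq_if_le)
  with assms eq show "g (rej al w u (\<lambda>s. P s \<omega>) t) (hist \<omega> (t - 1)) (R_u al w u (\<lambda>s. P s \<omega>) T)
      = g (rej al w u (\<lambda>s. P s \<omega>') t) (hist \<omega>' (t - 1)) (R_u al w u (\<lambda>s. P s \<omega>') T)"
    by (simp add: rej_def R_u_eq_R_u_of)
qed

definition loo_hist :: "nat \<Rightarrow> nat \<Rightarrow> 'a \<Rightarrow> nat \<Rightarrow> bool" where
  "loo_hist t n \<omega> = rej_hist al w u ((\<lambda>s. P s \<omega>)(t := 0)) n"

lemma loo_hist_level_set_in: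
  "{\<omega>\<in>space M. loo_hist t n \<omega> = h}
     \<in> sigma_sets (space M) {P s -` A \<inter> space M | s A. s \<in> {1..} - {t} \<and> A \<in> sets borel}"
  (is "_ \<in> ?B")
proof -
  have "sigma_algebra (space M) ?B" by (rule sigma_algebra_sigma_sets) auto
  moreover have "{\<omega>\<in>space M. ((\<lambda>s. P s \<omega>)(t := 0)) s \<le> x} \<in> ?B" if "1 \<le> s" for s x
  proof (cases "s = t")
    case True
    then show ?thesis by (cases "0 \<le> x") (auto intro: sigma_sets_top sigma_sets.Empty)
  next
    case False
    then have "{\<omega>\<in>space M. ((\<lambda>s. P s \<omega>)(t := 0)) s \<le> x} = P s -` {..x} \<inter> space M" by auto
    also have "\<dots> \<in> ?B" using False that atMost_borel[of x] by (intro sigma_sets.Basic) blast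
    finally show ?thesis .
  qed
  ultimately show ?thesis unfolding loo_hist_def by (rule rej_hist_level_set_in)
qed

lemma hist_eq_hist_upto_loo_hist:
  assumes "t \<le> T"
  shows "hist \<omega> (t - 1) = hist_upto (t - 1) (loo_hist t T \<omega>)"
proof -
  have "hist \<omega> (t - 1) = rej_hist al w u ((\<lambda>s. P s \<omega>)(t := 0)) (t - 1)"
    by (rule rej_hist_cong) auto
  also have "\<dots> = hist_upto (t - 1) (loo_hist t T \<omega>)"
    unfolding loo_hist_def using assms by (intro rej_hist_eq_hist_upto) simp
  finally show ?thesis .
qed

lemma loo_hist_eq_hist: "rej al w u (\<lambda>s. P s \<omega>) t \<Longrightarrow> loo_hist t n \<omega> = hist \<omega> n"
  unfolding loo_hist_def using threshold_nonneg[OF rej_imp_ge_1]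
  by (rule rej_hist_fun_upd_zero)

lemma R_u_le_R_u_of_loo_hist:
  "\<omega> \<in> space M \<Longrightarrow> R_u al w u (\<lambda>s. P s \<omega>) T \<le> R_u_of u T (loo_hist t T \<omega>)"
  unfolding loo_hist_def R_u_eq_R_u_of[symmetric]
  using al_nonneg u_pos w_pos al_mono u_mono w_mono P_nonneg
  by (intro R_u_antimono) (auto simp: less_imp_le)

lemma rej_iff_le_loo_threshold:
  assumes "1 \<le> t" "t \<le> T"
  shows "rej al w u (\<lambda>s. P s \<omega>) t \<longleftrightarrow>
    P t \<omega> \<le> al t (hist_upto (t - 1) (loo_hist t T \<omega>)) * u t (hist_upto (t - 1) (loo_hist t T \<omega>))
             * w t (hist_upto (t - 1) (loo_hist t T \<omega>))"
  using rej_Suc[of al w u "\<lambda>s. P s \<omega>" "t - 1"] assms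
  unfolding hist_eq_hist_upto_loo_hist[OF assms(2)] by simp

lemma divide_R_u_of_loo_hist_le:
  assumes "\<omega> \<in> space M" "0 \<le> x"
  shows "x / max (R_u_of u T (loo_hist t T \<omega>)) 1 \<le> x / max (R_u al w u (\<lambda>s. P s \<omega>) T) 1"
  using R_u_le_R_u_of_loo_hist[OF assms(1), of T t] assms(2)
  by (intro divide_left_mono) (auto intro!: mult_pos_pos)

lemma P_le_in_sigma_sets: "{\<omega>\<in>space M. P t \<omega> \<le> x} \<in> sigma_sets (space M) {P t -` A \<inter> space M | A. A \<in> sets borel}"
proof -
  have "{\<omega>\<in>space M. P t \<omega> \<le> x} = P t -` {..x} \<inter> space M" by auto
  also have "\<dots> \<in> sigma_sets (space M) {P t -` A \<inter> space M | A. A \<in> sets borel}"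
    by (rule sigma_sets.Basic) (use atMost_borel[of x] in blast)
  finally show ?thesis .
qed

lemma rejection_integral_le:
  fixes c :: "(nat \<Rightarrow> bool) \<Rightarrow> real"
  assumes t: "t \<in> H0" "1 \<le> t" "t \<le> T" and c_nonneg: "\<And>h. 0 \<le> c h"
  defines "D \<omega> \<equiv> max (R_u al w u (\<lambda>s. P s \<omega>) T) 1"
  shows "(\<integral>\<omega>. (if rej al w u (\<lambda>s. P s \<omega>) t then c (hist \<omega> (t - 1)) else 0) / D \<omega> \<partial>M)
      \<le> (\<integral>\<omega>. al t (hist \<omega> (t - 1)) * u t (hist \<omega> (t - 1)) * w t (hist \<omega> (t - 1))
             * c (hist \<omega> (t - 1)) / D \<omega> \<partial>M)"
proof -
  define thr where "thr h = al t h * u t h * w t h" for h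
  define K where "K = loo_hist t T"
  define F where "F k = thr (hist_upto (t - 1) k)" for k
  define G where "G k = c (hist_upto (t - 1) k) / max (R_u_of u T k) 1" for k
  have hist_K: "hist \<omega> (t - 1) = hist_upto (t - 1) (K \<omega>)" for \<omega>
    unfolding K_def using t(3) by (rule hist_eq_hist_upto_loo_hist)
  have rej_K: "rej al w u (\<lambda>s. P s \<omega>) t \<longleftrightarrow> P t \<omega> \<le> F (K \<omega>)" for \<omega>
    unfolding F_def thr_def K_def using t(2,3) by (rule rej_iff_le_loo_threshold)
  have lhs: "(if rej al w u (\<lambda>s. P s \<omega>) t then c (hist \<omega> (t - 1)) else 0) / D \<omega>
      = (if P t \<omega> \<le> F (K \<omega>) then G (K \<omega>) else 0)" for \<omega>
  proof (cases "rej al w u (\<lambda>s. P s \<omega>) t")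
    case True
    have "D \<omega> = max (R_u_of u T (K \<omega>)) 1"
      unfolding D_def K_def R_u_eq_R_u_of loo_hist_eq_hist[OF True] ..
    with True rej_K[of \<omega>] show ?thesis unfolding hist_K by (simp add: G_def)
  qed (use rej_K in simp)
  have rhs: "F (K \<omega>) * G (K \<omega>) \<le> thr (hist \<omega> (t - 1)) * c (hist \<omega> (t - 1)) / D \<omega>"
    if "\<omega> \<in> space M" for \<omega>
    unfolding F_def G_def hist_K D_def K_def thr_def using that threshold_nonneg[OF t(2)] c_nonneg
    by (simp add: divide_R_u_of_loo_hist_le)
  have rhs_integrable: "integrable M (\<lambda>\<omega>. thr (hist \<omega> (t - 1)) * c (hist \<omega> (t - 1)) / D \<omega>)"
    unfolding D_def using integrable_fun_rej_hist_R_u[OF t(3), of "\<lambda>_ h R. thr h * c h / max R 1"] .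
  have F_nonneg: "0 \<le> F k" and G_nonneg: "0 \<le> G k" for k
    unfolding F_def G_def thr_def using threshold_nonneg[OF t(2)] c_nonneg by simp_all
  have K_in: "K \<omega> \<in> histories T" for \<omega>
    unfolding K_def loo_hist_def by (rule rej_hist_in_histories)
  note indep_bound = indep_threshold_integral_le[OF indep[OF t(1)] P_le_in_sigma_sets superunif[OF t(1)]
      finite_histories K_in loo_hist_level_set_in[of t T, folded K_def] F_nonneg G_nonneg]
  have "(\<integral>\<omega>. (if rej al w u (\<lambda>s. P s \<omega>) t then c (hist \<omega> (t - 1)) else 0) / D \<omega> \<partial>M)
      = (\<integral>\<omega>. (if P t \<omega> \<le> F (K \<omega>) then G (K \<omega>) else 0) \<partial>M)"
    unfolding lhs ..
  also have "\<dots> \<le> (\<integral>\<omega>. F (K \<omega>) * G (K \<omega>) \<partial>M)"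
    by (rule indep_bound(3))
  also have "\<dots> \<le> (\<integral>\<omega>. thr (hist \<omega> (t - 1)) * c (hist \<omega> (t - 1)) / D \<omega> \<partial>M)"
    using indep_bound(2) rhs_integrable rhs by (rule integral_mono)
  finally show ?thesis unfolding thr_def .
qed

lemma excess_integral_nonpos:
  fixes a W0 :: real and phi psi :: "nat \<Rightarrow> (nat \<Rightarrow> bool) \<Rightarrow> real"
  assumes t: "t \<in> H0" "1 \<le> t" "t \<le> T"
    and phi_nonneg: "\<And>\<omega>. \<omega> \<in> space M \<Longrightarrow> 0 \<le> phi t (hist \<omega> (t - 1))"
  defines "E \<omega> \<equiv> excess a W0 al w u phi psi (\<lambda>s. P s \<omega>) t / max (R_u al w u (\<lambda>s. P s \<omega>) T) 1"
  shows "integrable M E" and "integral\<^sup>L M E \<le> 0"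
proof -
  define D where "D \<omega> = max (R_u al w u (\<lambda>s. P s \<omega>) T) 1" for \<omega>
  define c where "c = rejection_gain a W0 al w u phi psi t"
  define L where "L \<omega> = (if rej al w u (\<lambda>s. P s \<omega>) t then c (hist \<omega> (t - 1)) else 0) / D \<omega>" for \<omega>
  define \<Phi> where "\<Phi> \<omega> = phi t (hist \<omega> (t - 1)) / D \<omega>" for \<omega>
  have E_eq: "E = (\<lambda>\<omega>. L \<omega> - \<Phi> \<omega>)"
    unfolding E_def excess_def L_def \<Phi>_def D_def c_def by (simp add: diff_divide_distrib)
  have L: "integrable M L" and \<Phi>: "integrable M \<Phi>"
    and rhs: "integrable M (\<lambda>\<omega>. al t (hist \<omega> (t - 1)) * u t (hist \<omega> (t - 1)) * w t (hist \<omega> (t - 1))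
                 * c (hist \<omega> (t - 1)) / D \<omega>)"
    unfolding L_def \<Phi>_def D_def using t(3) by (rule integrable_fun_rej_hist_R_u)+
  then show "integrable M E" unfolding E_eq by simp
  have "integral\<^sup>L M L \<le> (\<integral>\<omega>. al t (hist \<omega> (t - 1)) * u t (hist \<omega> (t - 1)) * w t (hist \<omega> (t - 1))
                 * c (hist \<omega> (t - 1)) / D \<omega> \<partial>M)"
    unfolding L_def D_def c_def using t al_nonneg u_pos w_pos
    by (intro rejection_integral_le rejection_gain_nonneg) auto
  also have "\<dots> \<le> integral\<^sup>L M \<Phi>"
    using rhs \<Phi> unfolding \<Phi>_def c_def
    by (rule integral_mono) (use t phi_nonneg u_pos w_pos threshold_mult_rejection_gain_le in
        \<open>auto intro!: divide_right_mono simp: D_def\<close>)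
  finally show "integral\<^sup>L M E \<le> 0" unfolding E_eq using L \<Phi> by simp
qed

lemma integral_excess_ratio_sum_le:
  fixes a W0 :: real and phi psi :: "nat \<Rightarrow> (nat \<Rightarrow> bool) \<Rightarrow> real" and T :: nat
  assumes phi_nonneg: "\<And>t \<omega>. 1 \<le> t \<Longrightarrow> \<omega> \<in> space M \<Longrightarrow> 0 \<le> phi t (hist \<omega> (t - 1))"
  defines "g \<omega> \<equiv> a + (\<Sum>t\<in>{1..T} \<inter> H0.
             excess a W0 al w u phi psi (\<lambda>s. P s \<omega>) t / max (R_u al w u (\<lambda>s. P s \<omega>) T) 1)"
  shows "integrable M g" and "integral\<^sup>L M g \<le> a"
proof -
  define E where "E t \<omega> = excess a W0 al w u phi psi (\<lambda>s. P s \<omega>) t / max (R_u al w u (\<lambda>s. P s \<omega>) T) 1"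
    for t \<omega>
  have E: "integrable M (E t)" "integral\<^sup>L M (E t) \<le> 0" if "t \<in> {1..T} \<inter> H0" for t
    using that phi_nonneg unfolding E_def by (auto intro!: excess_integral_nonpos)
  have sum_E: "integrable M (\<lambda>\<omega>. \<Sum>t\<in>{1..T} \<inter> H0. E t \<omega>)"
    using E(1) by (rule Bochner_Integration.integrable_sum)
  then show "integrable M g" unfolding g_def E_def[symmetric] by simp
  have "(\<Sum>t\<in>{1..T} \<inter> H0. integral\<^sup>L M (E t)) \<le> 0" using E(2) by (rule sum_nonpos)
  moreover have "integral\<^sup>L M g = a + (\<Sum>t\<in>{1..T} \<inter> H0. integral\<^sup>L M (E t))"
    unfolding g_def E_def[symmetric] using sum_E E(1)
    by (simp add: Bochner_Integration.integral_sum prob_space)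
  ultimately show "integral\<^sup>L M g \<le> a" by simp
qed

end

theorem theorem3:
  fixes M :: "'a measure" and P :: "nat \<Rightarrow> 'a \<Rightarrow> real" and H0 :: "nat set"
    and a W0 :: real
    and al w u phi psi :: "nat \<Rightarrow> (nat \<Rightarrow> bool) \<Rightarrow> real"
    and T :: nat
  assumes prob: "prob_space M"
    and a_range: "0 < a" "a < 1"
    and W0_range: "0 \<le> W0" "W0 \<le> a"
    and P_meas: "\<And>t. P t \<in> borel_measurable M"
    and P_range: "\<And>t \<omega>. \<omega> \<in> space M \<Longrightarrow> 0 \<le> P t \<omega> \<and> P t \<omega> \<le> 1"
    and H0_sub: "H0 \<subseteq> {1..}"
    and superunif: "\<And>t x. t \<in> H0 \<Longrightarrow> 0 \<le> x \<Longrightarrow> x \<le> 1 \<Longrightarrow>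
                      measure M {\<omega> \<in> space M. P t \<omega> \<le> x} \<le> x"
    and indep: "\<And>t. t \<in> H0 \<Longrightarrow>
                  prob_space.indep_set M
                    (sigma_sets (space M) {P t -` A \<inter> space M | A. A \<in> sets borel})
                    (sigma_sets (space M)
                       {P s -` A \<inter> space M | s A. s \<in> {1..} - {t} \<and> A \<in> sets borel})"
    and al_nonneg: "\<And>t h. t \<ge> 1 \<Longrightarrow> 0 \<le> al t h"
    and w_pos: "\<And>t h. t \<ge> 1 \<Longrightarrow> 0 < w t h"
    and u_pos: "\<And>t h. t \<ge> 1 \<Longrightarrow> 0 < u t h"
    and al_mono: "monotone_pred al"
    and w_mono: "monotone_pred w"
    and u_mono: "monotone_pred u"
    and phi_nonneg: "\<And>t \<omega>. t \<ge> 1 \<Longrightarrow> \<omega> \<in> space M \<Longrightarrow>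
                       0 \<le> phi t (rej_hist al w u (\<lambda>s. P s \<omega>) (t - 1))"
    and phi_le: "\<And>t \<omega>. t \<ge> 1 \<Longrightarrow> \<omega> \<in> space M \<Longrightarrow>
                   phi t (rej_hist al w u (\<lambda>s. P s \<omega>) (t - 1))
                     \<le> wealth W0 phi psi al w u (\<lambda>s. P s \<omega>) (t - 1)"
    and psi_nonneg: "\<And>t \<omega>. t \<ge> 1 \<Longrightarrow> \<omega> \<in> space M \<Longrightarrow>
                       0 \<le> psi t (rej_hist al w u (\<lambda>s. P s \<omega>) (t - 1))"
    and psi_le1: "\<And>t \<omega>. t \<ge> 1 \<Longrightarrow> \<omega> \<in> space M \<Longrightarrow>
                    (let h = rej_hist al w u (\<lambda>s. P s \<omega>) (t - 1) in
                       psi t h \<le> phi t h + u t h * b_coef a W0 u t h)"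
    and psi_le2: "\<And>t \<omega>. t \<ge> 1 \<Longrightarrow> \<omega> \<in> space M \<Longrightarrow>
                    (let h = rej_hist al w u (\<lambda>s. P s \<omega>) (t - 1) in
                       al t h \<noteq> 0 \<longrightarrow>
                       psi t h \<le> phi t h / (u t h * w t h * al t h)
                                   + u t h * b_coef a W0 u t h - u t h)"
  shows "(\<integral>\<omega>. (V_u H0 al w u (\<lambda>s. P s \<omega>) T + wealth W0 phi psi al w u (\<lambda>s. P s \<omega>) T)
               / max (R_u al w u (\<lambda>s. P s \<omega>) T) 1 \<partial>M) \<le> a
       \<and> (\<integral>\<omega>. V_u H0 al w u (\<lambda>s. P s \<omega>) T / max (R_u al w u (\<lambda>s. P s \<omega>) T) 1 \<partial>M) \<le> a"
proof -
  interpret doubly_weighted_gai M P H0 al w u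
    using prob P_meas P_range superunif indep al_nonneg w_pos u_pos al_mono w_mono u_mono
    by (intro doubly_weighted_gai.intro doubly_weighted_gai_axioms.intro) auto
  define D where "D \<omega> = max (R_u al w u (\<lambda>s. P s \<omega>) T) 1" for \<omega>
  define g where "g \<omega> = a + (\<Sum>t\<in>{1..T} \<inter> H0. excess a W0 al w u phi psi (\<lambda>s. P s \<omega>) t / D \<omega>)"
    for \<omega>
  have g: "integrable M g" "integral\<^sup>L M g \<le> a"
    unfolding g_def D_def using integral_excess_ratio_sum_le[of phi a W0 psi T] phi_nonneg by blast+
  have bound: "(V_u H0 al w u (\<lambda>s. P s \<omega>) T + wealth W0 phi psi al w u (\<lambda>s. P s \<omega>) T) / D \<omega> \<le> g \<omega>"
    if "\<omega> \<in> space M" for \<omega>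
    unfolding D_def g_def using W0_range u_pos phi_nonneg[OF _ that]
      psi_le1[OF _ that, unfolded Let_def] psi_le2[OF _ that, unfolded Let_def]
    by (intro V_u_add_wealth_div_le) auto
  have "V_u H0 al w u (\<lambda>s. P s \<omega>) T / D \<omega>
      \<le> (V_u H0 al w u (\<lambda>s. P s \<omega>) T + wealth W0 phi psi al w u (\<lambda>s. P s \<omega>) T) / D \<omega>"
    if "\<omega> \<in> space M" for \<omega>
    using wealth_nonneg[OF W0_range(1) phi_le[OF _ that] psi_nonneg[OF _ that]]
    by (intro divide_right_mono) (simp_all add: D_def)
  with bound have "V_u H0 al w u (\<lambda>s. P s \<omega>) T / D \<omega> \<le> g \<omega>" if "\<omega> \<in> space M" for \<omega>
    using that by (meson order_trans)
  with bound g a_range show ?thesis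
    unfolding D_def by (auto intro: integral_le_of_dominated)
qed

end
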